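(* For each integer $k\geq -1$, there is a polynomial $h_k(t)\in\mathbb{Q}[t]$ of degree $\lceil k/2\rceil$ such that for all $g\geq \frac{9k+7}{2}$, \[\#\{S\in\mathcal{S}_g\mid e(S)=g-k\}=h_k(g).\] Moreover, $\lceil k/2\rceil!\,h_k(t)$ is a monic polynomial with integer coefficients.
   Context: A numerical semigroup $S$ is a submonoid of $\mathbb{N}_0$ with finite complement; its genus is $|\mathbb{N}_0\setminus S|$. The embedding dimension $e(S)$ is the size of the minimal generating set $(S\setminus\{0\})\setminus((S\setminus\{0\})+(S\setminus\{0\}))$. $\mathcal{S}_g$ is the set of numerical semigroups of genus $g$. *)

theory Defs
  imports Main "HOL-Computational_Algebra.Polynomial"
begin

definition numerical_semigroup :: "nat set \<Rightarrow> bool" where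
  "numerical_semigroup S \<longleftrightarrow>
     0 \<in> S \<and> (\<forall>a\<in>S. \<forall>b\<in>S. a + b \<in> S) \<and> finite (UNIV - S)"

definition genus :: "nat set \<Rightarrow> nat" where
  "genus S = card (UNIV - S)"

text \<open>Embedding dimension: size of the minimal generating set
  (S minus 0) minus ((S minus 0) + (S minus 0)).\<close>
definition embedding_dimension :: "nat set \<Rightarrow> nat" where
  "embedding_dimension S =
     card ((S - {0}) - {a + b | a b. a \<in> S - {0} \<and> b \<in> S - {0}})"

definition semigroups_of_genus :: "nat \<Rightarrow> nat set set" where
  "semigroups_of_genus g = {S. numerical_semigroup S \<and> genus S = g}"

end

theory Submission
  imports Defs
begin

text \<open>If \<open>e(S) = g - k\<close>, then since \<open>e(S)\<close> is at most the multiplicity \<open>m\<close> of \<open>S\<close>, at most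
  \<open>k + 1\<close> gaps of \<open>S\<close> lie above \<open>m\<close>; for \<open>g \<ge> 3 (k + 1)\<close> a pigeonhole argument puts them all
  below \<open>3 m\<close>. Then \<open>S\<close> is determined by \<open>A = {a < m. m + a \<notin> S}\<close> and
  \<open>B = {b < m. 2 m + b \<notin> S}\<close>, the admissible pairs are those with \<open>B\<close> inside the set of
  \<open>a \<in> A\<close> admitting no splitting \<open>a = c + d\<close> with positive \<open>c, d \<notin> A\<close>, and \<open>g + 1 - e(S)\<close> is a weight
  of \<open>(A, B)\<close> in which every element of \<open>A\<close> above \<open>2 k + 1\<close> counts twice. Fixing \<open>B\<close> and
  the part of \<open>A\<close> up to \<open>2 k + 1\<close> leaves \<open>r\<close> elements of \<open>A\<close> to be chosen freely from an
  interval of length \<open>g - c\<close>, so the count is a finite sum of binomials \<open>C(g - c, r)\<close>; the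
  largest \<open>r\<close>, namely \<open>\<lceil>k/2\<rceil>\<close>, occurs for exactly one choice, which makes
  \<open>\<lceil>k/2\<rceil>!\<close> times the count a monic integer polynomial in \<open>g\<close>.\<close>

section \<open>Multiplicity, gaps and minimal generators\<close>

definition nonzero_sums :: "nat set \<Rightarrow> nat set" where
  "nonzero_sums S = {a + b | a b. a \<in> S - {0} \<and> b \<in> S - {0}}"

definition min_generators :: "nat set \<Rightarrow> nat set" where
  "min_generators S = (S - {0}) - nonzero_sums S"

lemma embedding_dimension_eq_card_min_generators:
  "embedding_dimension S = card (min_generators S)"
  by (simp add: embedding_dimension_def min_generators_def nonzero_sums_def)

definition ns_multiplicity :: "nat set \<Rightarrow> nat" where
  "ns_multiplicity S = (LEAST x. x \<in> S \<and> 0 < x)"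

definition gaps_above :: "nat set \<Rightarrow> nat \<Rightarrow> nat set" where
  "gaps_above S m = {x. m < x \<and> x \<notin> S}"

definition first_gaps :: "nat set \<Rightarrow> nat set" where
  "first_gaps S = {a. 0 < a \<and> a < ns_multiplicity S \<and> ns_multiplicity S + a \<notin> S}"

definition second_gaps :: "nat set \<Rightarrow> nat set" where
  "second_gaps S = {b. 0 < b \<and> b < ns_multiplicity S \<and> 2 * ns_multiplicity S + b \<notin> S}"

definition unsplittable :: "nat set \<Rightarrow> nat set" where
  "unsplittable A = {a \<in> A. \<forall>c. 0 < c \<and> c < a \<longrightarrow> c \<in> A \<or> a - c \<in> A}"

lemma unsplittable_subset: "unsplittable A \<subseteq> A"
  by (auto simp: unsplittable_def)

lemma unsplittable_iff:
  assumes "0 \<notin> A"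
  shows "c \<in> unsplittable A \<longleftrightarrow> (\<forall>d\<le>c. d \<in> A \<or> c - d \<in> A)"
proof
  assume c: "c \<in> unsplittable A"
  show "\<forall>d\<le>c. d \<in> A \<or> c - d \<in> A"
  proof (intro allI impI)
    fix d assume "d \<le> c"
    then consider "d = 0" | "d = c" | "0 < d \<and> d < c" by linarith
    then show "d \<in> A \<or> c - d \<in> A"
      using c by cases (auto simp: unsplittable_def)
  qed
next
  assume "\<forall>d\<le>c. d \<in> A \<or> c - d \<in> A"
  then show "c \<in> unsplittable A"
    using assms by (auto simp: unsplittable_def)
qed

locale num_semigroup =
  fixes S :: "nat set"
  assumes numerical: "numerical_semigroup S"
begin

abbreviation m where "m \<equiv> ns_multiplicity S"
abbreviation A where "A \<equiv> first_gaps S"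
abbreviation B where "B \<equiv> second_gaps S"

lemma zero_mem: "0 \<in> S"
  using numerical by (simp add: numerical_semigroup_def)

lemma add_mem: "a \<in> S \<Longrightarrow> b \<in> S \<Longrightarrow> a + b \<in> S"
  using numerical by (simp add: numerical_semigroup_def)

lemma finite_gaps: "finite (UNIV - S)"
  using numerical by (simp add: numerical_semigroup_def)

lemma mult_mem: "a \<in> S \<Longrightarrow> q * a \<in> S"
  by (induction q) (auto simp: zero_mem add_mem)

lemma nonzero_sums_subset: "nonzero_sums S \<subseteq> S"
  by (auto simp: nonzero_sums_def add_mem)

lemma multiplicity_mem: "m \<in> S" and multiplicity_pos: "0 < m"
proof -
  obtain n where "UNIV - S \<subseteq> {..<n}"
    using finite_gaps finite_nat_bounded by blast
  then have "Suc n \<in> S \<and> 0 < Suc n"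
    by auto
  then have "m \<in> S \<and> 0 < m"
    unfolding ns_multiplicity_def by (rule LeastI)
  then show "m \<in> S" "0 < m"
    by simp_all
qed

lemma multiplicity_le: "x \<in> S \<Longrightarrow> 0 < x \<Longrightarrow> m \<le> x"
  unfolding ns_multiplicity_def by (simp add: Least_le)

lemma first_gaps_subset: "A \<subseteq> {0<..<m}"
  by (auto simp: first_gaps_def)

lemma first_layer_mem_iff: "d < m \<Longrightarrow> m + d \<in> S \<longleftrightarrow> d \<notin> A"
  using multiplicity_mem by (cases "d = 0") (auto simp: first_gaps_def)

lemma second_layer_mem_iff: "0 < c \<Longrightarrow> c < m \<Longrightarrow> 2 * m + c \<in> S \<longleftrightarrow> c \<notin> B"
  by (auto simp: second_gaps_def)

lemma card_min_generators_le: "card (min_generators S) \<le> m"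
proof -
  have distinct_residues: "x mod m \<noteq> y mod m"
    if "x \<in> min_generators S" "y \<in> min_generators S" "x < y" for x y
  proof
    assume "x mod m = y mod m"
    then obtain q where q: "y = x + q * m"
      using \<open>x < y\<close> by (metis less_imp_le_nat mod_eq_dvd_iff_nat dvd_def mult.commute
          le_add_diff_inverse)
    with \<open>x < y\<close> have "q * m \<in> S - {0}"
      using mult_mem[OF multiplicity_mem] by auto
    moreover have "x \<in> S - {0}"
      using that(1) by (simp add: min_generators_def)
    ultimately have "y \<in> nonzero_sums S"
      unfolding nonzero_sums_def q by blast
    with that(2) show False
      by (simp add: min_generators_def)
  qed
  have "inj_on (\<lambda>x. x mod m) (min_generators S)"
    by (rule inj_onI) (metis distinct_residues linorder_cases)
  moreover have "(\<lambda>x. x mod m) ` min_generators S \<subseteq> {..<m}"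
    using multiplicity_pos by auto
  ultimately show ?thesis
    by (metis card_image card_lessThan card_mono finite_lessThan)
qed

lemma finite_gaps_above: "finite (gaps_above S m)"
  by (rule finite_subset[OF _ finite_gaps]) (auto simp: gaps_above_def)

lemma gaps_eq: "UNIV - S = {1..<m} \<union> gaps_above S m"
proof -
  have "x \<notin> S \<longleftrightarrow> x \<in> {1..<m} \<union> gaps_above S m" for x
  proof (cases "x < m")
    case True
    then show ?thesis
      using zero_mem multiplicity_le[of x] by (cases "x = 0") (auto simp: gaps_above_def)
  next
    case False
    then show ?thesis
      using multiplicity_mem by (cases "x = m") (auto simp: gaps_above_def)
  qed
  then show ?thesis
    by blast
qed

lemma genus_eq_gaps_above: "genus S = (m - 1) + card (gaps_above S m)"
proof -
  have "{1..<m} \<inter> gaps_above S m = {}"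
    by (auto simp: gaps_above_def)
  then show ?thesis
    by (simp add: genus_def gaps_eq card_Un_disjoint finite_gaps_above)
qed

lemma nonzero_sums_iff:
  "x \<in> nonzero_sums S \<longleftrightarrow> (\<exists>u. m \<le> u \<and> u + m \<le> x \<and> u \<in> S \<and> x - u \<in> S)"
proof
  assume "x \<in> nonzero_sums S"
  then obtain a b where "x = a + b" "a \<in> S" "b \<in> S" "0 < a" "0 < b"
    by (auto simp: nonzero_sums_def)
  then show "\<exists>u. m \<le> u \<and> u + m \<le> x \<and> u \<in> S \<and> x - u \<in> S"
    using multiplicity_le by (intro exI[of _ a]) force
next
  assume "\<exists>u. m \<le> u \<and> u + m \<le> x \<and> u \<in> S \<and> x - u \<in> S"
  then obtain u where "m \<le> u" "u + m \<le> x" "u \<in> S" "x - u \<in> S"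
    by blast
  then show "x \<in> nonzero_sums S"
    using multiplicity_pos unfolding nonzero_sums_def
    by (intro CollectI exI[of _ u] exI[of _ "x - u"]) auto
qed

lemma below_two_mult_notin_nonzero_sums: "x < 2 * m \<Longrightarrow> x \<notin> nonzero_sums S"
  by (auto simp: nonzero_sums_iff)

text \<open>The only way to write \<open>2 m + c\<close> as a sum is \<open>(m + d) + (m + (c - d))\<close>.\<close>
lemma second_layer_in_nonzero_sums_iff:
  assumes "c < m"
  shows "2 * m + c \<in> nonzero_sums S \<longleftrightarrow> c \<notin> unsplittable A"
proof -
  have "2 * m + c \<in> nonzero_sums S \<longleftrightarrow> (\<exists>d\<le>c. m + d \<in> S \<and> m + (c - d) \<in> S)"
    unfolding nonzero_sums_iff
  proof safe
    fix u assume "m \<le> u" "u + m \<le> 2 * m + c" "u \<in> S" "2 * m + c - u \<in> S"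
    moreover have "2 * m + c - u = m + (c - (u - m))"
      using calculation(1,2) by simp
    ultimately show "\<exists>d\<le>c. m + d \<in> S \<and> m + (c - d) \<in> S"
      by (intro exI[of _ "u - m"]) auto
  next
    fix d assume "d \<le> c" "m + d \<in> S" "m + (c - d) \<in> S"
    then show "\<exists>u\<ge>m. u + m \<le> 2 * m + c \<and> u \<in> S \<and> 2 * m + c - u \<in> S"
      by (intro exI[of _ "m + d"]) (auto simp: algebra_simps)
  qed
  also have "\<dots> \<longleftrightarrow> \<not> (\<forall>d\<le>c. d \<in> A \<or> c - d \<in> A)"
    using assms first_layer_mem_iff by auto
  also have "\<dots> \<longleftrightarrow> c \<notin> unsplittable A"
    using unsplittable_iff[of A c] first_gaps_subset by fastforce
  finally show ?thesis .
qed

lemma second_gaps_subset_unsplittable: "B \<subseteq> unsplittable A"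
proof
  fix b assume "b \<in> B"
  then have "b < m" "2 * m + b \<notin> nonzero_sums S"
    using nonzero_sums_subset by (auto simp: second_gaps_def)
  then show "b \<in> unsplittable A"
    using second_layer_in_nonzero_sums_iff by blast
qed

end

section \<open>Semigroups with few gaps above the multiplicity\<close>

lemma finite_first_gaps: "finite (first_gaps S)"
  by (rule finite_subset[of _ "{..<ns_multiplicity S}"]) (auto simp: first_gaps_def)

lemma finite_second_gaps: "finite (second_gaps S)"
  by (rule finite_subset[of _ "{..<ns_multiplicity S}"]) (auto simp: second_gaps_def)

locale few_gaps_semigroup = num_semigroup +
  assumes few_gaps: "2 * card (gaps_above S m) < m"
begin

text \<open>Pigeonhole: if \<open>x\<close> were not a sum, every \<open>u\<close> in \<open>[m, m + j]\<close>, \<open>j\<close> the number of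
  gaps above \<open>m\<close>, would give a gap above \<open>m\<close> (\<open>u\<close> itself or \<open>x - u\<close>), all distinct.\<close>
lemma in_nonzero_sums_if_three_mult_le:
  assumes "3 * m \<le> x"
  shows "x \<in> nonzero_sums S"
proof (rule ccontr)
  let ?G = "gaps_above S m"
  let ?j = "card ?G"
  assume "x \<notin> nonzero_sums S"
  then have no_split: "x - u \<notin> S" if "u \<in> S" "m \<le> u" "u + m \<le> x" for u
    using that by (auto simp: nonzero_sums_iff)
  define f where "f u = (if u \<in> S then x - u else u)" for u
  have "f ` {m..m + ?j} \<subseteq> ?G"
  proof
    fix y assume "y \<in> f ` {m..m + ?j}"
    then obtain u where u: "m \<le> u" "u \<le> m + ?j" "y = f u"
      by auto
    show "y \<in> ?G"
    proof (cases "u \<in> S")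
      case True
      then show ?thesis
        using u no_split[of u] few_gaps assms by (auto simp: f_def gaps_above_def)
    next
      case False
      then show ?thesis
        using u multiplicity_mem by (cases "u = m") (auto simp: f_def gaps_above_def)
    qed
  qed
  moreover have "inj_on f {m..m + ?j}"
    using few_gaps assms by (intro inj_onI) (auto simp: f_def split: if_splits)
  ultimately have "card {m..m + ?j} \<le> ?j"
    using card_inj_on_le finite_gaps_above by blast
  then show False
    by simp
qed

lemma gaps_above_eq: "gaps_above S m = (+) m ` A \<union> (+) (2 * m) ` B"
proof (intro equalityI subsetI)
  fix x assume x: "x \<in> gaps_above S m"
  then have "m < x" "x \<notin> S"
    by (auto simp: gaps_above_def)
  then have "x < 3 * m"
    using in_nonzero_sums_if_three_mult_le[of x] nonzero_sums_subset by (meson not_le subsetD)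
  moreover have "x \<noteq> 2 * m"
    using \<open>x \<notin> S\<close> mult_mem[OF multiplicity_mem, of 2] by auto
  ultimately consider "m < x" "x < 2 * m" | "2 * m < x" "x < 3 * m"
    using \<open>m < x\<close> by linarith
  then show "x \<in> (+) m ` A \<union> (+) (2 * m) ` B"
  proof cases
    case 1
    then have "x - m \<in> A"
      using x by (auto simp: gaps_above_def first_gaps_def)
    then show ?thesis
      using 1 by (intro UnI1 image_eqI[of _ _ "x - m"]) auto
  next
    case 2
    then have "x - 2 * m \<in> B"
      using x by (auto simp: gaps_above_def second_gaps_def)
    then show ?thesis
      using 2 by (intro UnI2 image_eqI[of _ _ "x - 2 * m"]) auto
  qed
next
  fix x assume "x \<in> (+) m ` A \<union> (+) (2 * m) ` B"
  then show "x \<in> gaps_above S m"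
    by (auto simp: gaps_above_def first_gaps_def second_gaps_def)
qed

lemma card_gaps_above: "card (gaps_above S m) = card A + card B"
proof -
  have "(+) m ` A \<inter> (+) (2 * m) ` B = {}"
    using first_gaps_subset by auto
  then show ?thesis
    unfolding gaps_above_eq
    by (simp add: card_Un_disjoint card_image finite_first_gaps finite_second_gaps)
qed

lemma genus_eq: "genus S = (m - 1) + card A + card B"
  using genus_eq_gaps_above card_gaps_above by simp

lemma min_generators_eq:
  "min_generators S = (S \<inter> {m..<2 * m}) \<union> (+) (2 * m) ` (unsplittable A - B)"
proof (rule set_eqI)
  fix x
  have unsplittable_pos: "c \<in> unsplittable A \<Longrightarrow> 0 < c \<and> c < m" for c
    using unsplittable_subset first_gaps_subset by fastforce
  consider "x < 2 * m" | "2 * m \<le> x" "x < 3 * m" | "3 * m \<le> x"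
    by linarith
  then show "x \<in> min_generators S \<longleftrightarrow> x \<in> (S \<inter> {m..<2 * m}) \<union> (+) (2 * m) ` (unsplittable A - B)"
  proof cases
    case 1
    then show ?thesis
      using multiplicity_le[of x] below_two_mult_notin_nonzero_sums
      by (auto simp: min_generators_def)
  next
    case 2
    define c where "c = x - 2 * m"
    have "x = 2 * m + c" "c < m"
      using 2 by (auto simp: c_def)
    then show ?thesis
      using unsplittable_pos[of c] second_layer_mem_iff[of c] second_layer_in_nonzero_sums_iff[of c]
      by (auto simp: min_generators_def)
  next
    case 3
    then show ?thesis
      using in_nonzero_sums_if_three_mult_le unsplittable_pos by (force simp: min_generators_def)
  qed
qed

lemma card_min_generators:
  "card (min_generators S) = (m - card A) + (card (unsplittable A) - card B)"
proof -
  have "x \<in> S \<longleftrightarrow> x \<notin> (+) m ` A" if "m \<le> x" "x < 2 * m" for x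
  proof -
    have "x \<in> (+) m ` A \<longleftrightarrow> x - m \<in> A"
      using \<open>m \<le> x\<close> by (auto intro: image_eqI[of _ _ "x - m"])
    then show ?thesis
      using first_layer_mem_iff[of "x - m"] that by simp
  qed
  then have "S \<inter> {m..<2 * m} = {m..<2 * m} - (+) m ` A"
    by auto
  moreover have "(+) m ` A \<subseteq> {m..<2 * m}"
    using first_gaps_subset by auto
  ultimately have first: "card (S \<inter> {m..<2 * m}) = m - card A"
    using finite_first_gaps by (simp add: card_Diff_subset card_image)
  have second: "card ((+) (2 * m) ` (unsplittable A - B)) = card (unsplittable A) - card B"
    using second_gaps_subset_unsplittable finite_second_gaps
    by (simp add: card_image card_Diff_subset)
  have "finite (unsplittable A)"
    using finite_first_gaps unsplittable_subset by (rule finite_subset[rotated])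
  then show ?thesis
    unfolding min_generators_eq
    by (subst card_Un_disjoint) (auto simp: first second)
qed

end

lemma few_gaps_semigroupI:
  assumes "numerical_semigroup S"
    and "3 * (genus S + 1 - embedding_dimension S) \<le> genus S"
  shows "few_gaps_semigroup S"
proof -
  interpret num_semigroup S
    by (rule num_semigroup.intro) (fact assms(1))
  have "embedding_dimension S \<le> m"
    using card_min_generators_le by (simp add: embedding_dimension_eq_card_min_generators)
  then have "2 * card (gaps_above S m) < m"
    using assms(2) genus_eq_gaps_above multiplicity_pos by linarith
  then show ?thesis
    by unfold_locales
qed

definition weight :: "nat set \<Rightarrow> nat set \<Rightarrow> nat" where
  "weight A B = card (unsplittable A) + 2 * card (A - unsplittable A) + 2 * card B"

lemma card_eq_card_unsplittable_add:
  "finite A \<Longrightarrow> card A = card (unsplittable A) + card (A - unsplittable A)"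
  using unsplittable_subset by (metis card_Diff_subset card_mono finite_subset le_add_diff_inverse)

lemma card_add_card_le_weight:
  assumes "finite A" "B \<subseteq> unsplittable A"
  shows "card A + card B \<le> weight A B"
  using card_eq_card_unsplittable_add[OF assms(1)] by (simp add: weight_def)

lemma (in few_gaps_semigroup) genus_add_one_eq:
  "genus S + 1 = embedding_dimension S + weight A B"
proof -
  have "card A \<le> m"
    using first_gaps_subset card_mono[of "{0<..<m}" A] by simp
  moreover have "card B \<le> card (unsplittable A)"
    using second_gaps_subset_unsplittable finite_first_gaps unsplittable_subset
    by (meson card_mono finite_subset)
  ultimately show ?thesis
    using genus_eq multiplicity_pos card_eq_card_unsplittable_add[OF finite_first_gaps]
    by (simp add: embedding_dimension_eq_card_min_generators card_min_generators weight_def)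
qed

section \<open>Semigroups with prescribed gap layers\<close>

definition semigroup_of_gaps :: "nat \<Rightarrow> nat set \<Rightarrow> nat set \<Rightarrow> nat set" where
  "semigroup_of_gaps m A B = {0} \<union> ({m..} - (+) m ` A - (+) (2 * m) ` B)"

locale gap_layers =
  fixes m :: nat and A B :: "nat set"
  assumes pos: "0 < m"
    and A_subset: "A \<subseteq> {0<..<m}"
    and B_subset_unsplittable: "B \<subseteq> unsplittable A"
begin

abbreviation T where "T \<equiv> semigroup_of_gaps m A B"

lemma B_subset: "B \<subseteq> {0<..<m}"
  using B_subset_unsplittable unsplittable_subset A_subset by blast

lemma mem_iff:
  "x \<in> T \<longleftrightarrow> x = 0 \<or> (m \<le> x \<and> (x < 2 * m \<longrightarrow> x - m \<notin> A)
                   \<and> (2 * m \<le> x \<and> x < 3 * m \<longrightarrow> x - 2 * m \<notin> B))"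
proof -
  have "x \<in> (+) m ` A \<longleftrightarrow> m \<le> x \<and> x < 2 * m \<and> x - m \<in> A"
    using A_subset by (auto intro: image_eqI[of _ _ "x - m"])
  moreover have "x \<in> (+) (2 * m) ` B \<longleftrightarrow> 2 * m \<le> x \<and> x < 3 * m \<and> x - 2 * m \<in> B"
    using B_subset by (auto intro: image_eqI[of _ _ "x - 2 * m"])
  ultimately show ?thesis
    unfolding semigroup_of_gaps_def by auto
qed

lemma first_layer_mem_iff: "d < m \<Longrightarrow> m + d \<in> T \<longleftrightarrow> d \<notin> A"
  using mem_iff[of "m + d"] pos by auto

lemma second_layer_mem_iff: "d < m \<Longrightarrow> 2 * m + d \<in> T \<longleftrightarrow> d \<notin> B"
  using mem_iff[of "2 * m + d"] pos by auto

text \<open>A sum \<open>(m + d) + (m + e)\<close> below \<open>3 m\<close> with \<open>d, e \<notin> A\<close> is \<open>2 m + (d + e)\<close>, and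
  \<open>d + e\<close> is then not unsplittable, hence not in \<open>B\<close>.\<close>
lemma numerical: "numerical_semigroup T"
  unfolding numerical_semigroup_def
proof (intro conjI ballI)
  show "0 \<in> T"
    by (simp add: semigroup_of_gaps_def)
  have "x \<in> T" if "3 * m \<le> x" for x
    using that mem_iff[of x] by simp
  then have "UNIV - T \<subseteq> {..<3 * m}"
    by (auto simp: not_less[symmetric])
  then show "finite (UNIV - T)"
    by (rule finite_subset) simp
  fix x y assume x: "x \<in> T" and y: "y \<in> T"
  show "x + y \<in> T"
  proof (cases "x = 0 \<or> y = 0")
    case True
    then show ?thesis
      using x y by auto
  next
    case False
    then have "m \<le> x" "m \<le> y"
      using x y mem_iff[of x] mem_iff[of y] by auto
    show ?thesis
    proof (cases "3 * m \<le> x + y")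
      case True
      then show ?thesis
        using \<open>m \<le> x\<close> mem_iff[of "x + y"] by simp
    next
      case False
      define d e where "d = x - m" and "e = y - m"
      have "x = m + d" "y = m + e" "x + y = 2 * m + (d + e)" "d + e < m"
        using \<open>m \<le> x\<close> \<open>m \<le> y\<close> False by (auto simp: d_def e_def)
      then have "d \<notin> A" "e \<notin> A"
        using x y first_layer_mem_iff[of d] first_layer_mem_iff[of e] by auto
      moreover have "0 \<notin> A"
        using A_subset by auto
      ultimately have "d + e \<notin> unsplittable A"
        using unsplittable_iff[of A "d + e"] by (metis add_diff_cancel_left' le_add1)
      then show ?thesis
        using \<open>x + y = 2 * m + (d + e)\<close> \<open>d + e < m\<close> second_layer_mem_iff B_subset_unsplittable
        by auto
    qed
  qed
qed

lemma num_semigroup: "num_semigroup T"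
  using numerical by (rule num_semigroup.intro)

lemma multiplicity: "ns_multiplicity T = m"
proof -
  have "m \<in> T"
    using first_layer_mem_iff[of 0] pos A_subset by auto
  then have "ns_multiplicity T \<le> m"
    using num_semigroup.multiplicity_le[OF num_semigroup] pos by blast
  moreover have "m \<le> ns_multiplicity T"
    using num_semigroup.multiplicity_mem[OF num_semigroup]
      num_semigroup.multiplicity_pos[OF num_semigroup] mem_iff[of "ns_multiplicity T"]
    by auto
  ultimately show ?thesis
    by simp
qed

lemma first_gaps: "first_gaps T = A"
  using A_subset first_layer_mem_iff by (auto simp: first_gaps_def multiplicity)

lemma second_gaps: "second_gaps T = B"
  using B_subset second_layer_mem_iff by (auto simp: second_gaps_def multiplicity)

lemma gaps_above: "gaps_above T m = (+) m ` A \<union> (+) (2 * m) ` B"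
  using A_subset B_subset by (auto simp: gaps_above_def semigroup_of_gaps_def)

lemma few_gaps_semigroup:
  assumes "2 * (card A + card B) < m"
  shows "few_gaps_semigroup T"
proof -
  have "finite A" "finite B"
    using A_subset B_subset by (auto intro: finite_subset)
  have "card (gaps_above T m) \<le> card ((+) m ` A) + card ((+) (2 * m) ` B)"
    unfolding gaps_above by (rule card_Un_le)
  also have "\<dots> \<le> card A + card B"
    using \<open>finite A\<close> \<open>finite B\<close> by (intro add_mono card_image_le)
  finally have "2 * card (gaps_above T m) < m"
    using assms by simp
  then show ?thesis
    using num_semigroup by (simp add: few_gaps_semigroup_def few_gaps_semigroup_axioms_def multiplicity)
qed

end

lemma (in few_gaps_semigroup) eq_semigroup_of_gaps: "S = semigroup_of_gaps m A B"
proof -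
  interpret T: gap_layers m A B
    using multiplicity_pos first_gaps_subset second_gaps_subset_unsplittable
    by unfold_locales
  have "UNIV - S = UNIV - T.T"
    using gaps_eq num_semigroup.gaps_eq[OF T.num_semigroup] gaps_above_eq T.gaps_above
      T.multiplicity by simp
  then show ?thesis
    by blast
qed

section \<open>Semigroups of given genus and embedding dimension\<close>

definition edim_semigroups :: "nat \<Rightarrow> int \<Rightarrow> nat set set" where
  "edim_semigroups g k = {S \<in> semigroups_of_genus g. int (embedding_dimension S) = int g - k}"

definition gap_pairs :: "nat \<Rightarrow> int \<Rightarrow> (nat set \<times> nat set) set" where
  "gap_pairs g k = {(A, B). A \<subseteq> {0<..<g + 1 - card A - card B} \<and> B \<subseteq> unsplittable A
                            \<and> int (weight A B) = k + 1}"

lemma few_gaps_semigroup_if_edim_semigroups: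
  assumes "S \<in> edim_semigroups g k" "3 * (k + 1) \<le> int g"
  shows "few_gaps_semigroup S"
  using assms
  by (intro few_gaps_semigroupI) (auto simp: edim_semigroups_def semigroups_of_genus_def)

lemma gap_pairs_if_edim_semigroups:
  assumes S: "S \<in> edim_semigroups g k" and g: "3 * (k + 1) \<le> int g"
  shows "(first_gaps S, second_gaps S) \<in> gap_pairs g k"
    and "ns_multiplicity S = g + 1 - card (first_gaps S) - card (second_gaps S)"
proof -
  interpret few_gaps_semigroup S
    using few_gaps_semigroup_if_edim_semigroups[OF assms] .
  have "genus S = g" "int (embedding_dimension S) = int g - k"
    using S by (auto simp: edim_semigroups_def semigroups_of_genus_def)
  then have "int (weight A B) = k + 1" "m = g + 1 - card A - card B"
    using genus_add_one_eq genus_eq multiplicity_pos by linarith+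
  then show "(A, B) \<in> gap_pairs g k" "m = g + 1 - card A - card B"
    using first_gaps_subset second_gaps_subset_unsplittable by (auto simp: gap_pairs_def)
qed

lemma edim_semigroups_if_gap_pairs:
  assumes AB: "(A, B) \<in> gap_pairs g k" and g: "3 * (k + 1) \<le> int g"
  defines "T \<equiv> semigroup_of_gaps (g + 1 - card A - card B) A B"
  shows "T \<in> edim_semigroups g k" "first_gaps T = A" "second_gaps T = B"
proof -
  let ?m = "g + 1 - card A - card B"
  have A: "A \<subseteq> {0<..<?m}" and B: "B \<subseteq> unsplittable A" and w: "int (weight A B) = k + 1"
    using AB by (auto simp: gap_pairs_def)
  have "card A + card B \<le> weight A B"
    using A B by (intro card_add_card_le_weight) (auto intro: finite_subset)
  then have "int (card A + card B) \<le> k + 1"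
    using w by linarith
  then have "3 * (card A + card B) \<le> g"
    using g by simp
  then have small: "2 * (card A + card B) < ?m"
    by simp
  interpret gap_layers ?m A B
    using A B small by unfold_locales auto
  interpret T: few_gaps_semigroup T
    unfolding T_def using small by (rule few_gaps_semigroup)
  show gaps: "first_gaps T = A" "second_gaps T = B"
    unfolding T_def by (rule first_gaps second_gaps)+
  have "ns_multiplicity T = ?m"
    unfolding T_def by (rule multiplicity)
  then have "genus T = g"
    using T.genus_eq small gaps by simp
  moreover have "int (embedding_dimension T) = int g - k"
    using T.genus_add_one_eq w gaps \<open>genus T = g\<close> by simp
  ultimately show "T \<in> edim_semigroups g k"
    using numerical by (simp add: T_def edim_semigroups_def semigroups_of_genus_def)
qed

lemma card_edim_semigroups:
  assumes "3 * (k + 1) \<le> int g"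
  shows "card (edim_semigroups g k) = card (gap_pairs g k)"
proof (rule bij_betw_same_card[of "\<lambda>S. (first_gaps S, second_gaps S)"], rule bij_betwI')
  fix S S' assume "S \<in> edim_semigroups g k" "S' \<in> edim_semigroups g k"
  then show "((first_gaps S, second_gaps S) = (first_gaps S', second_gaps S')) = (S = S')"
    using assms gap_pairs_if_edim_semigroups(2)
      few_gaps_semigroup.eq_semigroup_of_gaps[OF few_gaps_semigroup_if_edim_semigroups]
    by (metis prod.inject)
next
  fix S assume "S \<in> edim_semigroups g k"
  then show "(first_gaps S, second_gaps S) \<in> gap_pairs g k"
    using assms by (rule gap_pairs_if_edim_semigroups(1))
next
  fix p assume "p \<in> gap_pairs g k"
  then show "\<exists>S\<in>edim_semigroups g k. p = (first_gaps S, second_gaps S)"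
    using assms edim_semigroups_if_gap_pairs by (metis surj_pair)
qed

section \<open>Counting gap pairs by patterns\<close>

lemma unsplittable_less_two_card:
  assumes "finite A" "a \<in> unsplittable A"
  shows "a < 2 * card A"
proof -
  have "a \<in> A" and split: "\<And>c. 0 < c \<Longrightarrow> c < a \<Longrightarrow> c \<in> A \<or> a - c \<in> A"
    using assms(2) by (auto simp: unsplittable_def)
  have half: "2 * (a div 2) \<le> a" "a \<le> 2 * (a div 2) + 1"
    by linarith+
  define f where "f c = (if c \<in> A then c else a - c)" for c
  have "f c \<in> A - {a}" if "c \<in> {1..a div 2}" for c
  proof -
    have "0 < c" "c < a" "a - c \<noteq> a"
      using that half by auto
    then show ?thesis
      using split[of c] by (auto simp: f_def)
  qed
  then have "f ` {1..a div 2} \<subseteq> A - {a}"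
    by blast
  moreover have "inj_on f {1..a div 2}"
    using half by (intro inj_onI) (auto simp: f_def split: if_splits)
  ultimately have "a div 2 \<le> card A - 1"
    using card_inj_on_le[of f "{1..a div 2}" "A - {a}"] assms(1) \<open>a \<in> A\<close> by simp
  moreover have "0 < card A"
    using assms(1) \<open>a \<in> A\<close> card_gt_0_iff by blast
  ultimately show ?thesis
    using half by linarith
qed

lemma unsplittable_Un_above:
  assumes "A \<subseteq> {..L}" "C \<subseteq> {L<..}" "finite A" "finite C"
    and "2 * card (A \<union> C) \<le> L + 1"
  shows "unsplittable (A \<union> C) = unsplittable A"
proof (intro equalityI subsetI)
  fix a assume a: "a \<in> unsplittable (A \<union> C)"
  then have "a \<le> L"
    using unsplittable_less_two_card[of "A \<union> C" a] assms(3-5) by simp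
  have "c \<notin> C" if "c < a" for c
    using that \<open>a \<le> L\<close> subsetD[OF assms(2), of c] by auto
  then show "a \<in> unsplittable A"
    using a \<open>a \<le> L\<close> subsetD[OF assms(2), of a] by (auto simp: unsplittable_def)
next
  fix a assume "a \<in> unsplittable A"
  then show "a \<in> unsplittable (A \<union> C)"
    by (auto simp: unsplittable_def)
qed

lemma weight_Un_above:
  assumes "A \<subseteq> {..L}" "C \<subseteq> {L<..}" "finite A" "finite C"
    and "2 * card (A \<union> C) \<le> L + 1"
  shows "weight (A \<union> C) B = weight A B + 2 * card C"
proof -
  have "A \<inter> C = {}"
    using assms(1,2) by fastforce
  then have "(A \<union> C) - unsplittable A = (A - unsplittable A) \<union> C"
    "(A - unsplittable A) \<inter> C = {}"
    using unsplittable_subset by blast+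
  then show ?thesis
    using assms(3,4) unsplittable_Un_above[OF assms]
    by (simp add: weight_def card_Un_disjoint)
qed

definition cutoff :: "int \<Rightarrow> nat" where
  "cutoff k = nat (2 * k + 1)"

text \<open>A pair of \<open>gap_pairs g k\<close> is cut into its pattern \<open>(A \<inter> {..cutoff k}, B)\<close> and the rest of
  \<open>A\<close>, each element of which adds \<open>2\<close> to the weight; so a pattern needs exactly
  \<open>free_count k\<close> further elements, placed anywhere above \<open>cutoff k\<close>.\<close>
definition patterns :: "int \<Rightarrow> (nat set \<times> nat set) set" where
  "patterns k = {(A, B). A \<subseteq> {0<..cutoff k} \<and> B \<subseteq> unsplittable A
                         \<and> int (weight A B) \<le> k + 1 \<and> even (k + 1 - int (weight A B))}"

definition free_count :: "int \<Rightarrow> nat set \<times> nat set \<Rightarrow> nat" where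
  "free_count k p = nat ((k + 1 - int (weight (fst p) (snd p))) div 2)"

definition pattern_offset :: "int \<Rightarrow> nat set \<times> nat set \<Rightarrow> nat" where
  "pattern_offset k p = card (fst p) + card (snd p) + free_count k p + cutoff k"

definition tails :: "nat \<Rightarrow> int \<Rightarrow> nat set \<times> nat set \<Rightarrow> nat set set" where
  "tails g k p = {C. C \<subseteq> {cutoff k<..g - card (fst p) - card (snd p) - free_count k p}
                     \<and> card C = free_count k p}"

lemma finite_patterns: "finite (patterns k)"
proof -
  have "patterns k \<subseteq> Pow {0<..cutoff k} \<times> Pow {0<..cutoff k}"
    using unsplittable_subset by (fastforce simp: patterns_def)
  then show ?thesis
    by (rule finite_subset) simp
qed

lemma patternsD:
  assumes "(A, B) \<in> patterns k"
  shows "finite A" "A \<subseteq> {0<..cutoff k}" "B \<subseteq> unsplittable A"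
    and "int (weight A B) + 2 * int (free_count k (A, B)) = k + 1"
    and "int (card A + card B + free_count k (A, B)) \<le> k + 1"
proof -
  show A: "A \<subseteq> {0<..cutoff k}" and B: "B \<subseteq> unsplittable A"
    using assms by (auto simp: patterns_def)
  show "finite A"
    by (rule finite_subset[OF A]) simp
  then have "card A + card B \<le> weight A B"
    using B by (rule card_add_card_le_weight)
  moreover show "int (weight A B) + 2 * int (free_count k (A, B)) = k + 1"
    using assms by (auto simp: patterns_def free_count_def)
  ultimately show "int (card A + card B + free_count k (A, B)) \<le> k + 1"
    by linarith
qed

lemma Un_atMost_greaterThan_inject:
  fixes L :: "'a :: linorder"
  assumes "A \<subseteq> {..L}" "C \<subseteq> {L<..}" "A' \<subseteq> {..L}" "C' \<subseteq> {L<..}"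
    and "A \<union> C = A' \<union> C'"
  shows "A = A'" "C = C'"
proof -
  have "(A \<union> C) \<inter> {..L} = A" "(A \<union> C) \<inter> {L<..} = C"
    "(A' \<union> C') \<inter> {..L} = A'" "(A' \<union> C') \<inter> {L<..} = C'"
    using assms(1-4) by auto
  then show "A = A'" "C = C'"
    using assms(5) by simp_all
qed

context
  fixes g :: nat and k :: int
  assumes k: "-1 \<le> k" and g: "3 * (k + 1) \<le> int g"
begin

lemma two_card_le_cutoff: "int (card A + card B) \<le> k + 1 \<Longrightarrow> 2 * card A \<le> cutoff k + 1"
  using k by (simp add: cutoff_def)

lemma cutoff_add_le: "int n \<le> k + 1 \<Longrightarrow> cutoff k + n \<le> g"
  using k g by (simp add: cutoff_def)

lemma glue_mem_gap_pairs:
  assumes p: "(A, B) \<in> patterns k" and C: "C \<in> tails g k (A, B)"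
  shows "(A \<union> C, B) \<in> gap_pairs g k"
proof -
  let ?L = "cutoff k" and ?r = "free_count k (A, B)"
  note pat = patternsD[OF p]
  have C_sub: "C \<subseteq> {?L<..g - card A - card B - ?r}" and "card C = ?r"
    using C by (auto simp: tails_def)
  then have "finite C"
    by (meson finite_greaterThanAtMost finite_subset)
  have "A \<inter> C = {}"
    using pat(2) C_sub by fastforce
  then have card_AC: "card (A \<union> C) = card A + ?r"
    using pat(1) \<open>finite C\<close> \<open>card C = ?r\<close> by (simp add: card_Un_disjoint)
  have above: "A \<subseteq> {..?L}" "C \<subseteq> {?L<..}"
    using pat(2) C_sub by auto
  have "2 * card (A \<union> C) \<le> ?L + 1"
    using card_AC pat(5) by (intro two_card_le_cutoff[of _ B]) simp
  note split = unsplittable_Un_above[OF above pat(1) \<open>finite C\<close> this]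
    weight_Un_above[OF above pat(1) \<open>finite C\<close> this]
  have "?L + (card A + card B + ?r) \<le> g"
    using pat(5) by (rule cutoff_add_le)
  then have "A \<union> C \<subseteq> {0<..<g + 1 - card (A \<union> C) - card B}"
    using pat(2) C_sub card_AC by (auto simp: subset_iff)
  then show ?thesis
    using split pat(3,4) \<open>card C = ?r\<close> by (simp add: gap_pairs_def)
qed

lemma gap_pairs_eq_glue:
  "gap_pairs g k = (\<lambda>((A, B), C). (A \<union> C, B)) ` Sigma (patterns k) (tails g k)"
proof (intro equalityI subsetI)
  fix q assume q: "q \<in> gap_pairs g k"
  obtain A B where q_eq: "q = (A, B)"
    by (cases q)
  let ?L = "cutoff k"
  have A: "A \<subseteq> {0<..<g + 1 - card A - card B}" and B: "B \<subseteq> unsplittable A"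
    and w: "int (weight A B) = k + 1"
    using q q_eq by (auto simp: gap_pairs_def)
  have "finite A"
    using A by (rule finite_subset) simp
  define As C where "As = A \<inter> {..?L}" and "C = A \<inter> {?L<..}"
  have A_eq: "A = As \<union> C" and "As \<inter> C = {}" and above: "As \<subseteq> {..?L}" "C \<subseteq> {?L<..}"
    by (auto simp: As_def C_def)
  have "finite As" "finite C"
    using \<open>finite A\<close> by (auto simp: As_def C_def)
  have "card A + card B \<le> weight A B"
    using \<open>finite A\<close> B by (rule card_add_card_le_weight)
  then have "2 * card (As \<union> C) \<le> ?L + 1"
    using w A_eq by (intro two_card_le_cutoff[of _ B]) simp
  note split = unsplittable_Un_above[OF above \<open>finite As\<close> \<open>finite C\<close> this]
    weight_Un_above[OF above \<open>finite As\<close> \<open>finite C\<close> this]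
  have w_split: "k + 1 - int (weight As B) = 2 * int (card C)"
    using split(2) A_eq w by simp
  have "As \<subseteq> {0<..?L}"
    using A by (auto simp: As_def subset_iff)
  moreover have "B \<subseteq> unsplittable As"
    using B split(1) A_eq by simp
  moreover have "int (weight As B) \<le> k + 1" "even (k + 1 - int (weight As B))"
    using w_split by simp_all
  ultimately have "(As, B) \<in> patterns k"
    by (simp add: patterns_def)
  moreover have "free_count k (As, B) = card C"
    using w_split by (simp add: free_count_def)
  moreover have "card A = card As + card C"
    using A_eq \<open>As \<inter> C = {}\<close> \<open>finite As\<close> \<open>finite C\<close> by (simp add: card_Un_disjoint)
  ultimately have "((As, B), C) \<in> Sigma (patterns k) (tails g k)"
    using A by (auto simp: tails_def C_def subset_iff)
  moreover have "q = (\<lambda>((A, B), C). (A \<union> C, B)) ((As, B), C)"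
    using q_eq A_eq by simp
  ultimately show "q \<in> (\<lambda>((A, B), C). (A \<union> C, B)) ` Sigma (patterns k) (tails g k)"
    by (rule rev_image_eqI)
next
  fix q assume "q \<in> (\<lambda>((A, B), C). (A \<union> C, B)) ` Sigma (patterns k) (tails g k)"
  then obtain A B C where "(A, B) \<in> patterns k" "C \<in> tails g k (A, B)" "q = (A \<union> C, B)"
    by auto
  then show "q \<in> gap_pairs g k"
    using glue_mem_gap_pairs by simp
qed

lemma inj_on_glue: "inj_on (\<lambda>((A, B), C). (A \<union> C, B)) (Sigma (patterns k) (tails g k))"
proof (rule inj_onI)
  fix x y
  assume x: "x \<in> Sigma (patterns k) (tails g k)" and y: "y \<in> Sigma (patterns k) (tails g k)"
    and eq: "(\<lambda>((A, B), C). (A \<union> C, B)) x = (\<lambda>((A, B), C). (A \<union> C, B)) y"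
  obtain A B C A' B' C' where xy: "x = ((A, B), C)" "y = ((A', B'), C')"
    by (metis prod.collapse)
  have "A \<subseteq> {0<..cutoff k}" "A' \<subseteq> {0<..cutoff k}"
    "C \<subseteq> {cutoff k<..g - card A - card B - free_count k (A, B)}"
    "C' \<subseteq> {cutoff k<..g - card A' - card B' - free_count k (A', B')}"
    using x y xy by (simp_all add: patterns_def tails_def)
  moreover have "{0<..cutoff k} \<subseteq> {..cutoff k}" "{cutoff k<..n} \<subseteq> {cutoff k<..}" for n
    by auto
  ultimately have sub: "A \<subseteq> {..cutoff k}" "C \<subseteq> {cutoff k<..}"
    "A' \<subseteq> {..cutoff k}" "C' \<subseteq> {cutoff k<..}"
    by blast+
  have "A \<union> C = A' \<union> C'" "B = B'"
    using eq xy by simp_all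
  then show "x = y"
    using xy Un_atMost_greaterThan_inject[OF sub] by simp
qed

lemma card_tails: "card (tails g k p) = (g - pattern_offset k p) choose free_count k p"
proof -
  have "card (tails g k p)
      = card {cutoff k<..g - card (fst p) - card (snd p) - free_count k p} choose free_count k p"
    unfolding tails_def by (rule n_subsets) simp
  then show ?thesis
    by (simp add: pattern_offset_def)
qed

lemma finite_tails: "finite (tails g k p)"
  unfolding tails_def
  by (rule finite_subset[of _ "Pow {cutoff k<..g - card (fst p) - card (snd p) - free_count k p}"])
    auto

lemma card_gap_pairs:
  "card (gap_pairs g k) = (\<Sum>p\<in>patterns k. (g - pattern_offset k p) choose free_count k p)"
proof -
  have "card (gap_pairs g k) = card (Sigma (patterns k) (tails g k))"
    unfolding gap_pairs_eq_glue using inj_on_glue by (rule card_image)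
  also have "\<dots> = (\<Sum>p\<in>patterns k. card (tails g k p))"
    by (intro card_SigmaI finite_patterns ballI finite_tails)
  finally show ?thesis
    by (simp add: card_tails)
qed

end

lemma weight_eq_0_iff:
  assumes "finite A" "B \<subseteq> unsplittable A"
  shows "weight A B = 0 \<longleftrightarrow> A = {} \<and> B = {}"
proof
  assume "weight A B = 0"
  then have "card A + card B = 0"
    using card_add_card_le_weight[OF assms] by simp
  then show "A = {} \<and> B = {}"
    using assms unsplittable_subset by (auto intro: finite_subset)
qed (simp add: weight_def unsplittable_def)

lemma unsplittable_singleton: "0 < a \<Longrightarrow> a \<in> unsplittable {a} \<longleftrightarrow> a = 1"
  by (auto simp: unsplittable_def)

lemma weight_eq_1_iff:
  assumes "finite A" "B \<subseteq> unsplittable A" "0 \<notin> A"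
  shows "weight A B = 1 \<longleftrightarrow> A = {1} \<and> B = {}"
proof
  assume "weight A B = 1"
  then have "card (A - unsplittable A) = 0" "card B = 0" "card (unsplittable A) = 1"
    unfolding weight_def by arith+
  moreover have "finite (A - unsplittable A)" "finite B"
    using assms(1) finite_subset[OF order_trans[OF assms(2) unsplittable_subset] assms(1)]
    by simp_all
  ultimately have "A - unsplittable A = {}" "B = {}" "card (unsplittable A) = 1"
    by simp_all
  then obtain a where "unsplittable A = {a}" "A = {a}"
    using unsplittable_subset by (metis card_1_singletonE Diff_eq_empty_iff subset_antisym)
  then show "A = {1} \<and> B = {}"
    using assms(3) unsplittable_singleton[of a] \<open>B = {}\<close> by auto
next
  assume "A = {1} \<and> B = {}"
  moreover have "unsplittable {1} = {1}"
    by (auto simp: unsplittable_def)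
  ultimately show "weight A B = 1"
    by (simp add: weight_def)
qed

definition max_free_count :: "int \<Rightarrow> nat" where
  "max_free_count k = nat ((k + 1) div 2)"

definition top_pattern :: "int \<Rightarrow> nat set \<times> nat set" where
  "top_pattern k = (if even k then ({1}, {}) else ({}, {}))"

lemma free_count_le_max: "p \<in> patterns k \<Longrightarrow> free_count k p \<le> max_free_count k"
  using patternsD(4)[of "fst p" "snd p" k] by (simp add: free_count_def max_free_count_def)

lemma top_pattern:
  assumes "-1 \<le> k"
  shows "top_pattern k \<in> patterns k" "free_count k (top_pattern k) = max_free_count k"
proof -
  have "weight {} {} = 0" "weight {1} {} = 1"
    using weight_eq_0_iff[of "{}" "{}"] weight_eq_1_iff[of "{1}" "{}"] by simp_all
  moreover have "even k \<Longrightarrow> 0 \<le> k"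
    using assms by presburger
  then have "even k \<Longrightarrow> 1 \<le> cutoff k"
    by (simp add: cutoff_def)
  ultimately show "top_pattern k \<in> patterns k" "free_count k (top_pattern k) = max_free_count k"
    using assms by (auto simp: top_pattern_def patterns_def free_count_def max_free_count_def)
qed

lemma eq_top_pattern_if_max_free_count:
  assumes p: "p \<in> patterns k" and max: "free_count k p = max_free_count k"
  shows "p = top_pattern k"
proof -
  obtain A B where AB: "p = (A, B)"
    by (cases p)
  note pat = patternsD[OF p[unfolded AB]]
  have "0 \<le> k + 1"
    using pat(4) by linarith
  then have "int (free_count k (A, B)) = (k + 1) div 2"
    using max AB by (simp add: max_free_count_def)
  then have "int (weight A B) = (k + 1) mod 2"
    using pat(4) by presburger
  moreover have "0 \<notin> A"
    using pat(2) by auto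
  ultimately show ?thesis
    using AB pat(1,3) weight_eq_0_iff[of A B] weight_eq_1_iff[of A B]
    by (auto simp: top_pattern_def elim!: evenE oddE)
qed

section \<open>The counting polynomial\<close>

definition falling_poly :: "nat \<Rightarrow> nat \<Rightarrow> int poly" where
  "falling_poly c r = (\<Prod>i<r. [:- int (c + i), 1:])"

lemma degree_falling_poly: "degree (falling_poly c r) = r"
  unfolding falling_poly_def by (subst degree_prod_eq_sum_degree) auto

lemma coeff_falling_poly_self: "coeff (falling_poly c r) r = 1"
proof -
  have "lead_coeff (falling_poly c r) = 1"
    unfolding falling_poly_def lead_coeff_prod by simp
  then show ?thesis
    by (simp add: degree_falling_poly)
qed

lemma poly_falling_poly:
  assumes "c \<le> n"
  shows "poly (falling_poly c r) (int n) = int (fact r * ((n - c) choose r))"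
proof -
  have "(of_int (poly (falling_poly c r) (int n)) :: rat) = (\<Prod>i<r. of_nat (n - c) - of_nat i)"
    using assms by (simp add: falling_poly_def poly_prod algebra_simps)
  also have "\<dots> = fact r * (of_nat (n - c) gchoose r)"
    by (simp add: gbinomial_mult_fact atLeast0LessThan)
  also have "\<dots> = of_int (int (fact r * ((n - c) choose r)))"
    by (simp add: binomial_gbinomial)
  finally show ?thesis
    by (simp only: of_int_eq_iff)
qed

lemma poly_map_poly_of_int:
  "poly (map_poly (of_int :: int \<Rightarrow> 'a :: comm_ring_1) p) (of_int x) = of_int (poly p x)"
  by (induction p) (simp_all add: map_poly_pCons)

lemma poly_smult_falling_poly:
  assumes "r \<le> d" "c \<le> n"
  shows "poly (smult (int (fact d div fact r)) (falling_poly c r)) (int n)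
    = fact d * int ((n - c) choose r)"
proof -
  have "fact d div fact r * fact r = (fact d :: nat)"
    using assms(1) by (intro dvd_div_mult_self fact_dvd)
  have "poly (smult (int (fact d div fact r)) (falling_poly c r)) (int n)
      = int (fact d div fact r) * int (fact r * ((n - c) choose r))"
    using assms(2) by (simp add: poly_falling_poly del: of_nat_mult)
  also have "\<dots> = int (fact d div fact r * fact r * ((n - c) choose r))"
    by (simp only: of_nat_mult mult.assoc)
  also have "\<dots> = fact d * int ((n - c) choose r)"
    using \<open>fact d div fact r * fact r = fact d\<close> by simp
  finally show ?thesis .
qed

definition count_poly :: "int \<Rightarrow> int poly" where
  "count_poly k = (\<Sum>p\<in>patterns k. smult (int (fact (max_free_count k) div fact (free_count k p)))
                                        (falling_poly (pattern_offset k p) (free_count k p)))"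

lemma
  assumes "-1 \<le> k"
  shows degree_count_poly: "degree (count_poly k) = max_free_count k"
    and lead_coeff_count_poly: "lead_coeff (count_poly k) = 1"
proof -
  let ?d = "max_free_count k"
  let ?q = "\<lambda>p. smult (int (fact ?d div fact (free_count k p)))
                       (falling_poly (pattern_offset k p) (free_count k p))"
  have vanish: "coeff (?q p) n = 0"
    if "p \<in> patterns k" "?d \<le> n" "p \<noteq> top_pattern k \<or> ?d < n" for p n
  proof -
    have "free_count k p < ?d \<or> ?d < n"
      using that free_count_le_max eq_top_pattern_if_max_free_count le_neq_implies_less by blast
    moreover have "degree (?q p) \<le> free_count k p"
      using degree_smult_le[of _ "falling_poly _ _"] by (simp add: degree_falling_poly)
    ultimately show ?thesis
      using that(2) free_count_le_max[OF that(1)] by (intro coeff_eq_0) linarith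
  qed
  have split: "coeff (count_poly k) n
      = coeff (?q (top_pattern k)) n + (\<Sum>p\<in>patterns k - {top_pattern k}. coeff (?q p) n)" for n
    unfolding count_poly_def coeff_sum by (rule sum.remove[OF finite_patterns top_pattern(1)[OF assms]])
  have rest: "(\<Sum>p\<in>patterns k - {top_pattern k}. coeff (?q p) n) = 0" if "?d \<le> n" for n
    using that by (intro sum.neutral ballI vanish) auto
  have "coeff (count_poly k) n = 0" if "?d < n" for n
  proof -
    have "coeff (?q (top_pattern k)) n = 0"
      using top_pattern(1)[OF assms] that by (intro vanish) auto
    then show ?thesis
      unfolding split rest[OF less_imp_le[OF that]] by simp
  qed
  moreover have "coeff (count_poly k) ?d = 1"
    unfolding split rest[OF order.refl]
    using top_pattern(2)[OF assms] by (simp add: coeff_falling_poly_self)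
  ultimately show "degree (count_poly k) = ?d"
    by (intro order.antisym degree_le le_degree) auto
  then show "lead_coeff (count_poly k) = 1"
    using \<open>coeff (count_poly k) ?d = 1\<close> by simp
qed

lemma poly_count_poly:
  assumes "-1 \<le> k" "3 * (k + 1) \<le> int g"
  shows "poly (count_poly k) (int g) = fact (max_free_count k) * int (card (edim_semigroups g k))"
proof -
  have "poly (count_poly k) (int g)
      = (\<Sum>p\<in>patterns k. fact (max_free_count k) * int ((g - pattern_offset k p) choose free_count k p))"
    unfolding count_poly_def poly_sum
  proof (intro sum.cong refl)
    fix p assume p: "p \<in> patterns k"
    obtain A B where AB: "p = (A, B)"
      by (cases p)
    have "cutoff k + (card A + card B + free_count k (A, B)) \<le> g"
      using p AB by (intro cutoff_add_le[OF assms] patternsD(5)) simp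
    then have "pattern_offset k p \<le> g"
      using AB by (simp add: pattern_offset_def)
    then show "poly (smult (int (fact (max_free_count k) div fact (free_count k p)))
        (falling_poly (pattern_offset k p) (free_count k p))) (int g)
      = fact (max_free_count k) * int ((g - pattern_offset k p) choose free_count k p)"
      by (rule poly_smult_falling_poly[OF free_count_le_max[OF p]])
  qed
  also have "\<dots> = fact (max_free_count k) * int (card (edim_semigroups g k))"
    using card_edim_semigroups[OF assms(2)] card_gap_pairs[OF assms]
    by (simp add: sum_distrib_left)
  finally show ?thesis .
qed

lemma ceiling_half: "\<lceil>of_int k / (2::rat)\<rceil> = (k + 1) div 2"
proof -
  have "\<lceil>of_int k / (2::rat)\<rceil> = - \<lfloor>of_int (- k) / of_int (2::int) :: rat\<rfloor>"
    by (simp add: ceiling_def)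
  also have "\<dots> = - ((- k) div 2)"
    by (simp only: floor_divide_of_int_eq)
  also have "\<dots> = (k + 1) div 2"
    by presburger
  finally show ?thesis .
qed

theorem theorem1p13:
  fixes k :: int
  assumes "k \<ge> -1"
  shows "\<exists>h :: rat poly.
           degree h = nat \<lceil>of_int k / (2::rat)\<rceil> \<and>
           (\<forall>g :: nat. of_nat g \<ge> (9 * of_int k + 7) / (2::rat) \<longrightarrow>
              of_nat (card {S \<in> semigroups_of_genus g.
                              int (embedding_dimension S) = int g - k})
              = poly h (of_nat g)) \<and>
           (\<exists>p :: int poly. lead_coeff p = 1 \<and>
              map_poly of_int p = smult (fact (nat \<lceil>of_int k / (2::rat)\<rceil>)) h)"
proof -
  let ?d = "max_free_count k"
  define h :: "rat poly" where "h = smult (1 / fact ?d) (map_poly of_int (count_poly k))"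
  have "nat \<lceil>of_int k / (2::rat)\<rceil> = ?d"
    by (simp add: ceiling_half max_free_count_def)
  moreover have "degree h = ?d"
    using degree_count_poly[OF assms] by (simp add: h_def degree_map_poly)
  moreover have "of_nat (card (edim_semigroups g k)) = poly h (of_nat g)"
    if "of_nat g \<ge> (9 * of_int k + 7) / (2::rat)" for g
  proof -
    have "9 * k + 7 \<le> 2 * int g"
      using that by (simp add: field_simps flip: of_int_le_iff)
    then have "3 * (k + 1) \<le> int g"
      using assms by presburger
    then have "poly (map_poly of_int (count_poly k)) (of_nat g)
        = (fact ?d :: rat) * of_nat (card (edim_semigroups g k))"
      using poly_count_poly[OF assms] poly_map_poly_of_int[where 'a = rat, of "count_poly k" "int g"] by simp
    then show ?thesis
      by (simp add: h_def)
  qed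
  moreover have "map_poly of_int (count_poly k) = smult (fact ?d) h"
    by (simp add: h_def)
  ultimately show ?thesis
    using lead_coeff_count_poly[OF assms] by (auto simp: edim_semigroups_def)
qed

end
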